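(* Let $R$ be a finite group and let $\varphi$ be an automorphism of $R$ with $|R:C_R(\varphi)|=2$. Then one of the following holds: (1) $\frac14\left(|R|+|\mathbf{I}(R)|+|C_R(\varphi)|+|C_R(\varphi)^{-1}|\right)\le \mathbf{c}(R)-\frac{|R|}{32}$; (2) $A:=C_R(\varphi)$ is abelian of exponent greater than $2$, and there is $x\in R\setminus A$ with $x^2$ an involution of $A$ and $xax^{-1}=a^{-1}$ for all $a\in A$ (so $R=\langle A,x\rangle\cong \mathrm{Dic}(A,x^2,x)$ is generalized dicyclic over $A$), and $\varphi=\bar\iota_A$; (3) $R$ is abelian of exponent greater than $2$ and $\varphi=\iota$.
   Context: $\mathbf{I}(R)=\{x\in R\mid x^2=1\}$, $\mathbf{c}(R)=(|R|+|\mathbf{I}(R)|)/2$. For an automorphism $\varphi$: $C_R(\varphi)=\{x\in R\mid x^\varphi=x\}$ and $C_R(\varphi)^{-1}=\{x\in R\mid x^\varphi=x^{-1}\}$. $\iota:R\to R$ is the map $x\mapsto x^{-1}$. Generalized dicyclic: for $A$ abelian of even order and exponent $>2$ and $y$ an involution of $A$, $\mathrm{Dic}(A,y,x)=\langle A,x\mid x^2=y,\ x^{-1}ax=a^{-1}\ \forall a\in A\rangle$. For such a group, $\bar\iota_A$ is the automorphism with $a^{\bar\iota_A}=a$ and $(ax)^{\bar\iota_A}=ax^{-1}$ for all $a\in A$. *)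

theory Defs
  imports Complex_Main "HOL-Algebra.Group"
begin

definition invol_set :: "('a, 'b) monoid_scheme \<Rightarrow> 'a set" where
  "invol_set G = {x \<in> carrier G. x \<otimes>\<^bsub>G\<^esub> x = \<one>\<^bsub>G\<^esub>}"

definition c_num :: "('a, 'b) monoid_scheme \<Rightarrow> real" where
  "c_num G = (real (card (carrier G)) + real (card (invol_set G))) / 2"

definition fixset :: "('a, 'b) monoid_scheme \<Rightarrow> ('a \<Rightarrow> 'a) \<Rightarrow> 'a set" where
  "fixset G f = {x \<in> carrier G. f x = x}"

definition invset :: "('a, 'b) monoid_scheme \<Rightarrow> ('a \<Rightarrow> 'a) \<Rightarrow> 'a set" where
  "invset G f = {x \<in> carrier G. f x = inv\<^bsub>G\<^esub> x}"

definition set_exponent :: "('a, 'b) monoid_scheme \<Rightarrow> 'a set \<Rightarrow> nat" where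
  "set_exponent G A =
     (if \<exists>n::nat>0. \<forall>a\<in>A. a [^]\<^bsub>G\<^esub> n = \<one>\<^bsub>G\<^esub>
      then (LEAST n::nat. n > 0 \<and> (\<forall>a\<in>A. a [^]\<^bsub>G\<^esub> n = \<one>\<^bsub>G\<^esub>)) else 0)"

definition is_involution :: "('a, 'b) monoid_scheme \<Rightarrow> 'a \<Rightarrow> bool" where
  "is_involution G y \<longleftrightarrow> y \<in> carrier G \<and> y \<noteq> \<one>\<^bsub>G\<^esub> \<and> y \<otimes>\<^bsub>G\<^esub> y = \<one>\<^bsub>G\<^esub>"

end

theory Submission
  imports Defs "HOL-Algebra.Multiplicative_Group"
begin

text \<open>Let \<open>A = C\<^sub>R(\<phi>)\<close>. Clearing denominators, failure of the bound says that the elements of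
  \<open>R - A\<close> inverted by \<phi> outnumber \<open>3|A|/4\<close> plus the involutions outside \<open>A\<close>. Fix one such
  element \<open>x\<close>; since \<open>R - A = Ax\<close> and \<open>\<phi>(ax) = ax\<^sup>-\<^sup>1\<close>, the element \<open>ax\<close> is inverted by \<phi>
  exactly when conjugation by \<open>x\<close> inverts \<open>a\<close>. So conjugation by \<open>x\<close> inverts more than three
  quarters of \<open>A\<close>, and the classical argument (a multiplicatively closed subset of more than
  half of a finite group is the whole group) shows that \<open>A\<close> is abelian and inverted by \<open>x\<close>.
  Then every element of \<open>Ax\<close> squares to \<open>x\<^sup>2 \<in> A\<close>, which is an involution: if \<open>x\<^sup>2 = 1\<close>, the whole
  coset would consist of involutions, contradicting the count. Finally either \<open>A\<close> has an
  element of order \<open>> 2\<close> (the generalized dicyclic case), or \<open>A\<close> is elementary abelian, \<open>x\<close>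
  centralises \<open>A\<close>, and \<open>R\<close> is abelian with \<phi> the inversion map.\<close>

lemma (in group) mult_closed_subset_eq_subgroup:
  assumes A: "subgroup A G" "finite A" and HA: "H \<subseteq> A"
    and closed: "\<And>x y. x \<in> H \<Longrightarrow> y \<in> H \<Longrightarrow> x \<otimes> y \<in> H"
    and large: "card A < 2 * card H"
  shows "H = A"
proof
  show "A \<subseteq> H"
  proof
    fix g assume g: "g \<in> A"
    have carr: "\<And>y. y \<in> A \<Longrightarrow> y \<in> carrier G" using subgroup.mem_carrier[OF A(1)] .
    let ?K = "(\<lambda>h. g \<otimes> inv h) ` H"
    \<comment> \<open>\<open>H\<close> and \<open>g H\<^sup>-\<^sup>1\<close> are subsets of \<open>A\<close> of size \<open>card H > card A / 2\<close>, so they meet.\<close>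
    have "inj_on (\<lambda>h. g \<otimes> inv h) H"
    proof (rule inj_onI)
      fix h h' assume "h \<in> H" "h' \<in> H" "g \<otimes> inv h = g \<otimes> inv h'"
      then have "inv h = inv h'" using g HA carr by (simp add: subset_iff)
      then show "h = h'" using \<open>h \<in> H\<close> \<open>h' \<in> H\<close> HA carr by (metis inv_inv subsetD)
    qed
    then have "card ?K = card H" by (rule card_image)
    have "?K \<subseteq> A" using HA g A(1) by (auto intro!: subgroup.m_closed subgroup.m_inv_closed)
    have "H \<inter> ?K \<noteq> {}"
    proof (intro notI)
      assume "H \<inter> ?K = {}"
      then have "card (H \<union> ?K) = card H + card ?K"
        using HA \<open>?K \<subseteq> A\<close> A(2) by (intro card_Un_disjoint) (auto intro: finite_subset)
      moreover have "card (H \<union> ?K) \<le> card A" using HA \<open>?K \<subseteq> A\<close> A(2) by (intro card_mono) auto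
      ultimately show False using \<open>card ?K = card H\<close> large by linarith
    qed
    then obtain h1 h2 where h1: "h1 \<in> H" and h2: "h2 \<in> H" and "h1 = g \<otimes> inv h2" by blast
    then have "g = h1 \<otimes> h2" using HA g carr by (simp add: m_assoc subsetD)
    then show "g \<in> H" using closed[OF h1 h2] by simp
  qed
qed (rule HA)

lemma (in group) inverted_product_commute:
  assumes a: "a \<in> carrier G" and b: "b \<in> carrier G"
    and hom: "\<alpha> (a \<otimes> b) = \<alpha> a \<otimes> \<alpha> b"
    and "\<alpha> a = inv a" "\<alpha> b = inv b" "\<alpha> (a \<otimes> b) = inv (a \<otimes> b)"
  shows "a \<otimes> b = b \<otimes> a"
proof -
  have "inv (a \<otimes> b) = inv (b \<otimes> a)" using assms by (simp add: inv_mult_group)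
  then show ?thesis using a b by (metis inv_inv m_closed)
qed

lemma (in group) large_inverted_set_central:
  assumes H: "subgroup H G" "finite H"
    and hom: "\<And>x y. x \<in> H \<Longrightarrow> y \<in> H \<Longrightarrow> \<alpha> (x \<otimes> y) = \<alpha> x \<otimes> \<alpha> y"
    and large: "3 * card H < 4 * card {x \<in> H. \<alpha> x = inv x}"
    and a: "a \<in> H" "\<alpha> a = inv a" and b: "b \<in> H"
  shows "a \<otimes> b = b \<otimes> a"
proof -
  \<comment> \<open>\<open>a\<close> commutes with every element of \<open>S \<inter> a\<^sup>-\<^sup>1S\<close>, a set of more than \<open>|H|/2\<close> elements.\<close>
  define S where "S = {x \<in> H. \<alpha> x = inv x}"
  define S' where "S' = {x \<in> H. a \<otimes> x \<in> S}"
  define C where "C = {x \<in> H. a \<otimes> x = x \<otimes> a}"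
  have carr: "\<And>x. x \<in> H \<Longrightarrow> x \<in> carrier G" using subgroup.mem_carrier[OF H(1)] .
  have "S' = (\<lambda>x. inv a \<otimes> x) ` S"
  proof (intro equalityI subsetI)
    fix x assume "x \<in> S'"
    then have "x = inv a \<otimes> (a \<otimes> x)" "a \<otimes> x \<in> S"
      using a carr by (auto simp: S'_def m_assoc[symmetric])
    then show "x \<in> (\<lambda>x. inv a \<otimes> x) ` S" by blast
  next
    fix x assume "x \<in> (\<lambda>x. inv a \<otimes> x) ` S"
    then obtain y where y: "y \<in> S" "x = inv a \<otimes> y" by blast
    then have "a \<otimes> x = y" using a carr by (simp add: S_def m_assoc[symmetric])
    moreover have "x \<in> H" using y a H(1) by (simp add: S_def subgroup.m_closed subgroup.m_inv_closed)
    ultimately show "x \<in> S'" using y by (simp add: S'_def)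
  qed
  moreover have "inj_on (\<lambda>x. inv a \<otimes> x) S" using a carr by (intro inj_onI) (simp add: S_def)
  ultimately have card_S': "card S' = card S" by (simp add: card_image)
  have "S \<subseteq> H" "S' \<subseteq> H" by (auto simp: S_def S'_def)
  moreover have "finite S" "finite S'" using \<open>S \<subseteq> H\<close> \<open>S' \<subseteq> H\<close> H(2) by (auto intro: finite_subset)
  ultimately have "card S + card S' \<le> card H + card (S \<inter> S')"
    using card_Un_Int[of S S'] card_mono[of H "S \<union> S'"] H(2) by simp
  moreover have "S \<inter> S' \<subseteq> C"
    using a carr hom by (auto simp: S_def S'_def C_def intro: inverted_product_commute)
  ultimately have "card H < 2 * card C"
    using card_mono[of C "S \<inter> S'"] card_S' large H(2) by (fastforce simp: C_def S_def)
  moreover have "x \<otimes> y \<in> C" if "x \<in> C" "y \<in> C" for x y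
    using that a carr H(1) by (simp add: C_def subgroup.m_closed m_assoc flip: m_assoc[of a x y])
  ultimately have "C = H" by (intro mult_closed_subset_eq_subgroup[OF H]) (auto simp: C_def)
  then show ?thesis using b by (auto simp: C_def)
qed

lemma (in group) large_inverted_set_comm:
  assumes H: "subgroup H G" "finite H"
    and hom: "\<And>x y. x \<in> H \<Longrightarrow> y \<in> H \<Longrightarrow> \<alpha> (x \<otimes> y) = \<alpha> x \<otimes> \<alpha> y"
    and large: "3 * card H < 4 * card {x \<in> H. \<alpha> x = inv x}"
    and a: "a \<in> H" and b: "b \<in> H"
  shows "a \<otimes> b = b \<otimes> a"
proof -
  define Z where "Z = {x \<in> H. \<forall>y\<in>H. x \<otimes> y = y \<otimes> x}"
  have carr: "\<And>x. x \<in> H \<Longrightarrow> x \<in> carrier G" using subgroup.mem_carrier[OF H(1)] .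
  have "{x \<in> H. \<alpha> x = inv x} \<subseteq> Z"
    using large_inverted_set_central[OF H hom large] by (auto simp: Z_def)
  then have "card H < 2 * card Z"
    using card_mono[of Z "{x \<in> H. \<alpha> x = inv x}"] large H(2) by (simp add: Z_def)
  moreover have "x \<otimes> y \<in> Z" if x: "x \<in> Z" and y: "y \<in> Z" for x y
  proof -
    have xH: "x \<in> H" and yH: "y \<in> H" using x y by (simp_all add: Z_def)
    have "x \<otimes> y \<otimes> z = z \<otimes> (x \<otimes> y)" if z: "z \<in> H" for z
    proof -
      have "x \<otimes> y \<otimes> z = x \<otimes> (z \<otimes> y)" using y z xH carr by (simp add: Z_def m_assoc)
      also have "\<dots> = (z \<otimes> x) \<otimes> y" using x z yH carr by (simp add: Z_def flip: m_assoc)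
      finally show ?thesis using xH yH z carr by (simp add: m_assoc)
    qed
    then show ?thesis using xH yH H(1) by (simp add: Z_def subgroup.m_closed)
  qed
  moreover have "Z \<subseteq> H" by (auto simp: Z_def)
  ultimately have "Z = H" by (intro mult_closed_subset_eq_subgroup[OF H])
  then show ?thesis using a b by (auto simp: Z_def)
qed

lemma (in group) large_inverted_set_eq:
  assumes H: "subgroup H G" "finite H"
    and hom: "\<And>x y. x \<in> H \<Longrightarrow> y \<in> H \<Longrightarrow> \<alpha> (x \<otimes> y) = \<alpha> x \<otimes> \<alpha> y"
    and large: "3 * card H < 4 * card {x \<in> H. \<alpha> x = inv x}"
  shows "{x \<in> H. \<alpha> x = inv x} = H"
proof (rule mult_closed_subset_eq_subgroup[OF H])
  have carr: "\<And>x. x \<in> H \<Longrightarrow> x \<in> carrier G" using subgroup.mem_carrier[OF H(1)] .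
  fix x y assume x: "x \<in> {x \<in> H. \<alpha> x = inv x}" and y: "y \<in> {x \<in> H. \<alpha> x = inv x}"
  have "\<alpha> (x \<otimes> y) = inv x \<otimes> inv y" using x y hom by simp
  also have "\<dots> = inv y \<otimes> inv x"
    using x y H(1) by (intro large_inverted_set_comm[OF H hom large]) (auto intro: subgroup.m_inv_closed)
  finally have "\<alpha> (x \<otimes> y) = inv y \<otimes> inv x" .
  then show "x \<otimes> y \<in> {x \<in> H. \<alpha> x = inv x}"
    using x y carr H(1) by (simp add: inv_mult_group subgroup.m_closed)
qed (use large in auto)

lemma (in group) index_two_coset:
  assumes A: "subgroup A G" and fin: "finite (carrier G)"
    and index: "card (carrier G) = 2 * card A" and x: "x \<in> carrier G - A"
  shows "carrier G - A = (\<lambda>a. a \<otimes> x) ` A"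
proof -
  have carr: "\<And>a. a \<in> A \<Longrightarrow> a \<in> carrier G" using subgroup.mem_carrier[OF A] .
  have sub: "(\<lambda>a. a \<otimes> x) ` A \<subseteq> carrier G - A"
  proof
    fix y assume "y \<in> (\<lambda>a. a \<otimes> x) ` A"
    then obtain a where a: "a \<in> A" and y: "y = a \<otimes> x" by blast
    have "a \<otimes> x \<notin> A"
    proof
      assume "a \<otimes> x \<in> A"
      moreover have "x = inv a \<otimes> (a \<otimes> x)" using a x carr by (simp add: m_assoc[symmetric])
      ultimately have "x \<in> A" using a A by (metis subgroup.m_closed subgroup.m_inv_closed)
      then show False using x by simp
    qed
    then show "y \<in> carrier G - A" using a x y carr by simp
  qed
  have "inj_on (\<lambda>a. a \<otimes> x) A" using x carr by (intro inj_onI) simp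
  then have "card ((\<lambda>a. a \<otimes> x) ` A) = card (carrier G - A)"
    using card_image index card_Diff_subset[of A "carrier G"] subgroup.subset[OF A] fin
    by (simp add: finite_subset)
  then show ?thesis using sub fin by (intro card_subset_eq[symmetric]) simp_all
qed

lemma (in group) set_exponent_gt_two:
  assumes fin: "finite (carrier G)" and A: "A \<subseteq> carrier G"
    and a: "a \<in> A" "a \<otimes> a \<noteq> \<one>"
  shows "set_exponent G A > 2"
proof -
  let ?P = "\<lambda>n::nat. n > 0 \<and> (\<forall>a\<in>A. a [^] n = \<one>)"
  have "?P (order G)" using fin A order_gt_0_iff_finite pow_order_eq_1 by blast
  then have P: "?P (LEAST n. ?P n)" by (rule LeastI)
  have "a [^] n \<noteq> \<one>" if "n \<le> 2" "n > 0" for n :: nat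
    using that a A by (auto simp: le_Suc_eq numeral_2_eq_2)
  then have "\<not> (LEAST n. ?P n) \<le> 2" using P a(1) by blast
  then show ?thesis using \<open>?P (order G)\<close> by (auto simp: set_exponent_def)
qed

lemma (in group) subgroup_fixset:
  assumes "\<phi> \<in> hom G G"
  shows "subgroup (fixset G \<phi>) G"
proof -
  interpret group_hom G G \<phi> using assms by unfold_locales
  show ?thesis by (rule subgroupI) (auto simp: fixset_def)
qed

lemma (in group) comm_group_of_central_coset:
  assumes x: "x \<in> carrier G" and A: "A \<subseteq> carrier G"
    and cover: "\<And>g. g \<in> carrier G \<Longrightarrow> g \<in> A \<or> (\<exists>a\<in>A. g = a \<otimes> x)"
    and A_comm: "\<And>a b. a \<in> A \<Longrightarrow> b \<in> A \<Longrightarrow> a \<otimes> b = b \<otimes> a"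
    and x_central: "\<And>a. a \<in> A \<Longrightarrow> x \<otimes> a = a \<otimes> x"
  shows "comm_group G"
proof (rule group_comm_groupI)
  have coset_comm: "a \<otimes> (b \<otimes> x) = (b \<otimes> x) \<otimes> a" if "a \<in> A" "b \<in> A" for a b
    using that A_comm[OF that] x_central[OF that(1)] A x by (simp add: subset_iff m_assoc flip: m_assoc[of a b x])
  have coset_coset_comm: "(a \<otimes> x) \<otimes> (b \<otimes> x) = (b \<otimes> x) \<otimes> (a \<otimes> x)" if "a \<in> A" "b \<in> A" for a b
  proof -
    have ac: "a \<in> carrier G" and bc: "b \<in> carrier G" using that A by auto
    have "(a \<otimes> x) \<otimes> (b \<otimes> x) = a \<otimes> ((x \<otimes> b) \<otimes> x)" using ac bc x by (simp add: m_assoc)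
    also have "\<dots> = (a \<otimes> (b \<otimes> x)) \<otimes> x" using x_central[OF that(2)] ac bc x by (simp add: m_assoc)
    also have "\<dots> = (b \<otimes> x) \<otimes> (a \<otimes> x)" using coset_comm[OF that] ac bc x by (simp add: m_assoc)
    finally show ?thesis .
  qed
  fix g h assume "g \<in> carrier G" "h \<in> carrier G"
  then show "g \<otimes> h = h \<otimes> g" using cover A_comm coset_comm coset_coset_comm by metis
qed

lemma (in group) involution_if_square_inverted:
  assumes x: "x \<in> carrier G" and inverted: "x \<otimes> (x \<otimes> x) \<otimes> inv x = inv (x \<otimes> x)"
    and nontrivial: "x \<otimes> x \<noteq> \<one>"
  shows "is_involution G (x \<otimes> x)"
proof -
  have "x \<otimes> (x \<otimes> x) \<otimes> inv x = x \<otimes> x" using x by (simp add: m_assoc)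
  then have "x \<otimes> x = inv (x \<otimes> x)" using inverted by simp
  then have "(x \<otimes> x) \<otimes> (x \<otimes> x) = \<one>" using x by (metis m_closed r_inv)
  then show ?thesis using x nontrivial by (simp add: is_involution_def)
qed

locale index_two_fixset = group G for G (structure) +
  fixes \<phi> :: "'a \<Rightarrow> 'a"
  assumes finite_carrier: "finite (carrier G)"
    and hom_\<phi>: "\<phi> \<in> hom G G"
    and index_two: "card (carrier G) = 2 * card (fixset G \<phi>)"
begin

lemma fixset_subgroup: "subgroup (fixset G \<phi>) G"
  using subgroup_fixset[OF hom_\<phi>] .

lemma fixset_carrier: "a \<in> fixset G \<phi> \<Longrightarrow> a \<in> carrier G"
  by (simp add: fixset_def)

lemma outside_fixset_eq_coset:
  "x \<in> carrier G - fixset G \<phi> \<Longrightarrow> carrier G - fixset G \<phi> = (\<lambda>a. a \<otimes> x) ` fixset G \<phi>"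
  using index_two_coset[OF fixset_subgroup finite_carrier index_two] .

lemma \<phi>_coset:
  assumes "a \<in> fixset G \<phi>" "x \<in> carrier G" "\<phi> x = inv x"
  shows "\<phi> (a \<otimes> x) = a \<otimes> inv x"
  using assms hom_mult[OF hom_\<phi>] by (simp add: fixset_def)

lemma coset_in_invset_iff:
  assumes a: "a \<in> fixset G \<phi>" and x: "x \<in> carrier G" "\<phi> x = inv x"
  shows "a \<otimes> x \<in> invset G \<phi> \<longleftrightarrow> x \<otimes> a \<otimes> inv x = inv a"
proof -
  have ac: "a \<in> carrier G" using a by (rule fixset_carrier)
  have "a \<otimes> x \<in> invset G \<phi> \<longleftrightarrow> a \<otimes> inv x = inv x \<otimes> inv a"
    using \<phi>_coset[OF a x] ac x by (simp add: invset_def inv_mult_group)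
  also have "\<dots> \<longleftrightarrow> x \<otimes> (a \<otimes> inv x) = x \<otimes> (inv x \<otimes> inv a)"
    using ac x by simp
  also have "\<dots> \<longleftrightarrow> x \<otimes> a \<otimes> inv x = inv a"
    using ac x by (simp add: m_assoc flip: m_assoc[of x "inv x"])
  finally show ?thesis .
qed

lemma card_invset_outside_fixset:
  assumes x: "x \<in> invset G \<phi> - fixset G \<phi>"
  shows "card (invset G \<phi> - fixset G \<phi>) = card {a \<in> fixset G \<phi>. x \<otimes> a \<otimes> inv x = inv a}"
proof -
  have xc: "x \<in> carrier G - fixset G \<phi>" "\<phi> x = inv x" using x by (auto simp: invset_def)
  note coset = outside_fixset_eq_coset[OF xc(1)]
  have "invset G \<phi> - fixset G \<phi> = (\<lambda>a. a \<otimes> x) ` {a \<in> fixset G \<phi>. x \<otimes> a \<otimes> inv x = inv a}"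
  proof (intro equalityI subsetI)
    fix y assume y: "y \<in> invset G \<phi> - fixset G \<phi>"
    then have "y \<in> carrier G - fixset G \<phi>" by (auto simp: invset_def)
    then obtain a where "a \<in> fixset G \<phi>" "y = a \<otimes> x" using coset by blast
    then show "y \<in> (\<lambda>a. a \<otimes> x) ` {a \<in> fixset G \<phi>. x \<otimes> a \<otimes> inv x = inv a}"
      using y coset_in_invset_iff xc by auto
  next
    fix y assume "y \<in> (\<lambda>a. a \<otimes> x) ` {a \<in> fixset G \<phi>. x \<otimes> a \<otimes> inv x = inv a}"
    then obtain a where "a \<in> fixset G \<phi>" "x \<otimes> a \<otimes> inv x = inv a" "y = a \<otimes> x" by blast
    then show "y \<in> invset G \<phi> - fixset G \<phi>" using coset coset_in_invset_iff xc by auto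
  qed
  moreover have "inj_on (\<lambda>a. a \<otimes> x) {a \<in> fixset G \<phi>. x \<otimes> a \<otimes> inv x = inv a}"
    using xc by (intro inj_onI) (simp add: fixset_carrier)
  ultimately show ?thesis by (simp add: card_image)
qed

lemma square_in_fixset:
  assumes x: "x \<in> carrier G - fixset G \<phi>"
  shows "x \<otimes> x \<in> fixset G \<phi>"
proof (rule ccontr)
  assume "x \<otimes> x \<notin> fixset G \<phi>"
  then have "x \<otimes> x \<in> carrier G - fixset G \<phi>" using x by simp
  then obtain a where "a \<in> fixset G \<phi>" "x \<otimes> x = a \<otimes> x" using outside_fixset_eq_coset[OF x] by blast
  then have "x = a" using x by (simp add: fixset_carrier)
  then show False using x \<open>a \<in> fixset G \<phi>\<close> by simp
qed

lemma coset_square: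
  assumes x: "x \<in> carrier G" and a: "a \<in> fixset G \<phi>" and inverts: "x \<otimes> a \<otimes> inv x = inv a"
  shows "(a \<otimes> x) \<otimes> (a \<otimes> x) = x \<otimes> x"
proof -
  have ac: "a \<in> carrier G" using a by (rule fixset_carrier)
  have "x \<otimes> a = (x \<otimes> a \<otimes> inv x) \<otimes> x" using ac x by (simp add: m_assoc)
  then have xa: "x \<otimes> a = inv a \<otimes> x" using inverts by simp
  have "(a \<otimes> x) \<otimes> (a \<otimes> x) = a \<otimes> (x \<otimes> a) \<otimes> x" using ac x by (simp add: m_assoc)
  also have "\<dots> = a \<otimes> (inv a \<otimes> x) \<otimes> x" using xa by simp
  finally show ?thesis using ac x by (simp flip: m_assoc)
qed

lemma large_invset_if_bound_fails:
  assumes "\<not> (1/4) * (real (card (carrier G)) + real (card (invol_set G))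
                + real (card (fixset G \<phi>)) + real (card (invset G \<phi>)))
              \<le> c_num G - real (card (carrier G)) / 32"
  shows "3 * card (fixset G \<phi>) + 4 * card (invol_set G - fixset G \<phi>)
           < 4 * card (invset G \<phi> - fixset G \<phi>)"
proof -
  define A I J where "A = fixset G \<phi>" and "I = invol_set G" and "J = invset G \<phi>"
  have fin: "finite I" "finite J"
    using finite_carrier by (auto simp: I_def J_def invol_set_def invset_def)
  have "J \<inter> A \<subseteq> I \<inter> A"
    by (auto simp: A_def I_def J_def invset_def fixset_def invol_set_def dest: sym) (metis r_inv)
  then have "card (J \<inter> A) \<le> card (I \<inter> A)" using fin by (intro card_mono) auto
  moreover have "card J = card (J \<inter> A) + card (J - A)" "card I = card (I \<inter> A) + card (I - A)"
    using fin card_Int_Diff by blast+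
  moreover have "3 * real (card A) + 4 * real (card I) < 4 * real (card J)"
    using assms index_two by (simp add: A_def I_def J_def c_num_def field_simps)
  ultimately show ?thesis unfolding A_def I_def J_def by linarith
qed

lemma fixset_abelian_and_inverted:
  assumes x: "x \<in> invset G \<phi> - fixset G \<phi>"
    and large: "3 * card (fixset G \<phi>) < 4 * card (invset G \<phi> - fixset G \<phi>)"
  shows "a \<in> fixset G \<phi> \<Longrightarrow> b \<in> fixset G \<phi> \<Longrightarrow> a \<otimes> b = b \<otimes> a"
    and "a \<in> fixset G \<phi> \<Longrightarrow> x \<otimes> a \<otimes> inv x = inv a"
proof -
  have xc: "x \<in> carrier G" using x by (simp add: invset_def)
  have fin: "finite (fixset G \<phi>)" using finite_carrier by (simp add: fixset_def)
  have conj_mult: "x \<otimes> (a \<otimes> b) \<otimes> inv x = (x \<otimes> a \<otimes> inv x) \<otimes> (x \<otimes> b \<otimes> inv x)"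
    if "a \<in> fixset G \<phi>" "b \<in> fixset G \<phi>" for a b
    using that xc by (simp add: fixset_carrier m_assoc flip: m_assoc[of "inv x" x])
  note large' = large[unfolded card_invset_outside_fixset[OF x]]
  show "a \<in> fixset G \<phi> \<Longrightarrow> b \<in> fixset G \<phi> \<Longrightarrow> a \<otimes> b = b \<otimes> a"
    using large_inverted_set_comm[OF fixset_subgroup fin conj_mult large'] .
  show "a \<in> fixset G \<phi> \<Longrightarrow> x \<otimes> a \<otimes> inv x = inv a"
    using large_inverted_set_eq[OF fixset_subgroup fin conj_mult large'] by blast
qed

lemma square_ne_one:
  assumes x: "x \<in> carrier G - fixset G \<phi>"
    and inverts: "\<And>a. a \<in> fixset G \<phi> \<Longrightarrow> x \<otimes> a \<otimes> inv x = inv a"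
    and large: "card (invol_set G - fixset G \<phi>) < card (invset G \<phi> - fixset G \<phi>)"
  shows "x \<otimes> x \<noteq> \<one>"
proof
  assume "x \<otimes> x = \<one>"
  have "carrier G - fixset G \<phi> \<subseteq> invol_set G - fixset G \<phi>"
  proof
    fix g assume g: "g \<in> carrier G - fixset G \<phi>"
    then obtain a where "a \<in> fixset G \<phi>" "g = a \<otimes> x" using outside_fixset_eq_coset[OF x] by blast
    then have "g \<otimes> g = \<one>" using coset_square inverts \<open>x \<otimes> x = \<one>\<close> x by simp
    then show "g \<in> invol_set G - fixset G \<phi>" using g by (simp add: invol_set_def)
  qed
  then have "card (carrier G - fixset G \<phi>) \<le> card (invol_set G - fixset G \<phi>)"
    using finite_carrier by (intro card_mono) (auto simp: invol_set_def)
  moreover have "card (invset G \<phi> - fixset G \<phi>) \<le> card (carrier G - fixset G \<phi>)"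
    using finite_carrier by (intro card_mono) (auto simp: invset_def)
  ultimately show False using large by linarith
qed

lemma inversion_if_fixset_elementary:
  assumes x: "x \<in> carrier G - fixset G \<phi>" "\<phi> x = inv x" "x \<otimes> x \<noteq> \<one>"
    and inverts: "\<And>a. a \<in> fixset G \<phi> \<Longrightarrow> x \<otimes> a \<otimes> inv x = inv a"
    and elementary: "\<And>a. a \<in> fixset G \<phi> \<Longrightarrow> a \<otimes> a = \<one>"
  shows "comm_group G \<and> set_exponent G (carrier G) > 2 \<and> (\<forall>g\<in>carrier G. \<phi> g = inv g)"
proof (intro conjI ballI)
  have self_inv: "inv a = a" if "a \<in> fixset G \<phi>" for a
    using elementary[OF that] that by (simp add: fixset_carrier inv_equality)
  have A_comm: "a \<otimes> b = b \<otimes> a" if "a \<in> fixset G \<phi>" "b \<in> fixset G \<phi>" for a b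
  proof -
    have "a \<otimes> b = inv (a \<otimes> b)" using self_inv subgroup.m_closed[OF fixset_subgroup that] by simp
    also have "\<dots> = b \<otimes> a" using that by (simp add: self_inv fixset_carrier inv_mult_group)
    finally show ?thesis .
  qed
  have x_central: "x \<otimes> a = a \<otimes> x" if "a \<in> fixset G \<phi>" for a
    using inverts[OF that] self_inv[OF that] that x(1) by (simp add: fixset_carrier inv_solve_right')
  have cover: "g \<in> fixset G \<phi> \<or> (\<exists>a\<in>fixset G \<phi>. g = a \<otimes> x)" if "g \<in> carrier G" for g
    using that outside_fixset_eq_coset[OF x(1)] by blast
  show comm: "comm_group G"
    using x(1) fixset_carrier by (intro comm_group_of_central_coset[OF _ _ cover A_comm x_central]) auto
  show "set_exponent G (carrier G) > 2"
    using x by (intro set_exponent_gt_two[OF finite_carrier]) auto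
  fix g assume g: "g \<in> carrier G"
  show "\<phi> g = inv g"
  proof (cases "g \<in> fixset G \<phi>")
    case True
    then show ?thesis by (simp add: fixset_def self_inv)
  next
    case False
    then obtain a where a: "a \<in> fixset G \<phi>" "g = a \<otimes> x" using cover g by blast
    then have "\<phi> g = inv a \<otimes> inv x" using \<phi>_coset x self_inv by simp
    also have "\<dots> = inv g"
    proof -
      interpret comm_group G by (rule comm)
      show ?thesis using a x(1) by (simp add: fixset_carrier inv_mult_group m_comm)
    qed
    finally show ?thesis .
  qed
qed

lemma dicyclic_or_inversion_if_bound_fails:
  assumes "\<not> (1/4) * (real (card (carrier G)) + real (card (invol_set G))
                + real (card (fixset G \<phi>)) + real (card (invset G \<phi>)))
              \<le> c_num G - real (card (carrier G)) / 32"
  shows "(let A = fixset G \<phi> in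
            comm_group (G\<lparr>carrier := A\<rparr>) \<and> set_exponent G A > 2 \<and>
            (\<exists>x \<in> carrier G - A.
               x \<otimes> x \<in> A \<and> is_involution G (x \<otimes> x) \<and>
               (\<forall>a\<in>A. x \<otimes> a \<otimes> inv x = inv a) \<and>
               (\<forall>a\<in>A. \<phi> a = a \<and> \<phi> (a \<otimes> x) = a \<otimes> inv x)))
       \<or> (comm_group G \<and> set_exponent G (carrier G) > 2 \<and>
            (\<forall>g\<in>carrier G. \<phi> g = inv g))"
proof -
  note large = large_invset_if_bound_fails[OF assms]
  then have "invset G \<phi> - fixset G \<phi> \<noteq> {}" by (intro notI) simp
  then obtain x where x: "x \<in> invset G \<phi> - fixset G \<phi>" by blast
  have x_out: "x \<in> carrier G - fixset G \<phi>" "\<phi> x = inv x" using x by (auto simp: invset_def)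
  have "3 * card (fixset G \<phi>) < 4 * card (invset G \<phi> - fixset G \<phi>)" using large by linarith
  note A_comm = fixset_abelian_and_inverted(1)[OF x this]
    and inverts = fixset_abelian_and_inverted(2)[OF x this]
  have square: "x \<otimes> x \<in> fixset G \<phi>" using square_in_fixset[OF x_out(1)] .
  have "card (invset G \<phi> - fixset G \<phi>) \<le> card (fixset G \<phi>)"
    unfolding card_invset_outside_fixset[OF x] using finite_carrier by (intro card_mono) (auto simp: fixset_def)
  then have nontrivial: "x \<otimes> x \<noteq> \<one>"
    using square_ne_one[OF x_out(1) inverts] large by linarith
  show ?thesis
  proof (cases "\<forall>a\<in>fixset G \<phi>. a \<otimes> a = \<one>")
    case True
    then show ?thesis using inversion_if_fixset_elementary[OF x_out nontrivial inverts] by blast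
  next
    case False
    then have "set_exponent G (fixset G \<phi>) > 2"
      using set_exponent_gt_two[OF finite_carrier] fixset_carrier by blast
    moreover have "comm_group (G\<lparr>carrier := fixset G \<phi>\<rparr>)"
    proof -
      interpret A: group "G\<lparr>carrier := fixset G \<phi>\<rparr>"
        using subgroup.subgroup_is_group[OF fixset_subgroup is_group] .
      show ?thesis by (rule A.group_comm_groupI) (simp add: A_comm)
    qed
    moreover have "is_involution G (x \<otimes> x)"
      using x_out inverts[OF square] nontrivial by (intro involution_if_square_inverted) auto
    moreover have "\<forall>a\<in>fixset G \<phi>. \<phi> a = a \<and> \<phi> (a \<otimes> x) = a \<otimes> inv x"
      using \<phi>_coset x_out by (simp add: fixset_def)
    ultimately show ?thesis using x_out square inverts by (simp add: Let_def) blast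
  qed
qed

end

theorem lemma2p2:
  fixes R :: "('a, 'b) monoid_scheme" and \<phi> :: "'a \<Rightarrow> 'a"
  assumes "group R" and "finite (carrier R)"
    and "\<phi> \<in> iso R R"
    and "card (carrier R) = 2 * card (fixset R \<phi>)"
  shows "(1/4) * (real (card (carrier R)) + real (card (invol_set R))
            + real (card (fixset R \<phi>)) + real (card (invset R \<phi>)))
           \<le> c_num R - real (card (carrier R)) / 32
       \<or> (let A = fixset R \<phi> in
            comm_group (R\<lparr>carrier := A\<rparr>) \<and> set_exponent R A > 2 \<and>
            (\<exists>x \<in> carrier R - A.
               x \<otimes>\<^bsub>R\<^esub> x \<in> A \<and> is_involution R (x \<otimes>\<^bsub>R\<^esub> x) \<and>
               (\<forall>a\<in>A. x \<otimes>\<^bsub>R\<^esub> a \<otimes>\<^bsub>R\<^esub> inv\<^bsub>R\<^esub> x = inv\<^bsub>R\<^esub> a) \<and>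
               (\<forall>a\<in>A. \<phi> a = a \<and> \<phi> (a \<otimes>\<^bsub>R\<^esub> x) = a \<otimes>\<^bsub>R\<^esub> inv\<^bsub>R\<^esub> x)))
       \<or> (comm_group R \<and> set_exponent R (carrier R) > 2 \<and>
            (\<forall>g\<in>carrier R. \<phi> g = inv\<^bsub>R\<^esub> g))"
proof -
  interpret index_two_fixset R \<phi>
    using assms by (intro index_two_fixset.intro index_two_fixset_axioms.intro) (simp_all add: iso_def)
  show ?thesis using dicyclic_or_inversion_if_bound_fails by blast
qed

end
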